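(* Let $k>t+1$, $n>2k-t$, and let $\mathcal{S}_p$ be a maximal set of $k$-spaces in $\mathrm{PG}(n,q)$ pairwise intersecting in at least a $t$-space. Let $\psi(\mathcal{S}_p)=\min\{\dim T: T\text{ a subspace},\ \dim(T\cap\alpha)\geq t\ \forall\alpha\in\mathcal{S}_p\}$. If $\psi(\mathcal{S}_p)=t+x$ with $x\geq 2$, then \[|\mathcal{S}_p|\leq(\theta_{k-t})^x\left[{n-t-x\atop k-t-x}\right]_q\left[{t+x+1\atop t+1}\right]_q.\]
   Context: Dimensions are projective; $\left[{n\atop k}\right]_q=\frac{(q^n-1)\cdots(q^{n-k+1}-1)}{(q^k-1)\cdots(q-1)}$ for $k>0$, $=1$ for $k=0$; $\theta_m=\frac{q^{m+1}-1}{q-1}$. Maximal means no further $k$-space can be added keeping the property. *)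

theory Defs
  imports "HOL-Analysis.Analysis"
begin

text \<open>PG(n,q) is modelled by the vector space 'a^'m over a finite field 'a with
  q = CARD('a) and n = CARD('m) - 1. A projective d-space is a vector subspace of
  (vector) dimension d+1.\<close>

definition is_kspace :: "nat \<Rightarrow> ('a::field ^ 'm) set \<Rightarrow> bool" where
  "is_kspace k A \<longleftrightarrow> vec.subspace A \<and> vec.dim A = k + 1"

definition pairwise_t_intersecting :: "nat \<Rightarrow> ('a::field ^ 'm) set set \<Rightarrow> bool" where
  "pairwise_t_intersecting t S \<longleftrightarrow> (\<forall>A\<in>S. \<forall>B\<in>S. vec.dim (A \<inter> B) \<ge> t + 1)"

definition maximal_t_intersecting :: "nat \<Rightarrow> nat \<Rightarrow> ('a::field ^ 'm) set set \<Rightarrow> bool" where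
  "maximal_t_intersecting k t S \<longleftrightarrow>
     (\<forall>A\<in>S. is_kspace k A) \<and> pairwise_t_intersecting t S \<and>
     (\<forall>B. is_kspace k B \<and> B \<notin> S \<longrightarrow> \<not> pairwise_t_intersecting t (insert B S))"

definition psi :: "nat \<Rightarrow> ('a::field ^ 'm) set set \<Rightarrow> nat" where
  "psi t S = (LEAST d. \<exists>T. vec.subspace T \<and> vec.dim T = d + 1 \<and>
                           (\<forall>\<alpha>\<in>S. vec.dim (T \<inter> \<alpha>) \<ge> t + 1))"

definition gauss_binom :: "real \<Rightarrow> nat \<Rightarrow> nat \<Rightarrow> real" where
  "gauss_binom q n k = (\<Prod>i<k. q ^ (n - i) - 1) / (\<Prod>i<k. q ^ (i + 1) - 1)"

definition theta :: "real \<Rightarrow> nat \<Rightarrow> real" where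
  "theta q m = (q ^ (m + 1) - 1) / (q - 1)"

end

theory Submission
  imports Defs
begin

text \<open>Let T be a (t+x)-space meeting every member of S in a t-space; it exists since
  psi(S) = t+x. All bounds come from one double count: the members through a subspace \<sigma>
  against the points w of a set X outside \<sigma>, where the members through \<sigma> and w pass
  through the span of \<sigma> and w, of one dimension more.
  \<^item> At most [n-t-x, k-t-x] k-spaces pass through a (t+x)-space (X: all points).
  \<^item> If t \<le> dim \<sigma> < t+x, minimality of psi yields a member \<beta> meeting \<sigma> in less than a
    t-space, hence a (k-t)-space W of \<beta> missing \<sigma>. Each member through \<sigma> meets \<beta> in
    a t-space and hence meets W, so X = W costs a factor theta(k-t) per dimension,
    x times from a t-space up to a (t+x)-space.
  \<^item> Each member meets T in a t-space, so counting inside T (X = T - \<sigma>) from the empty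
    space up to the t-spaces of T costs the factor [t+x+1, t+1].
  In the formal statements dimensions are vector dimensions, one more than the projective ones.\<close>

lemma card_span_independent:
  fixes B :: "('a::{finite,field}^'m) set"
  assumes "vec.independent B"
  shows "card (vec.span B) = CARD('a) ^ card B"
proof -
  have "finite B" by simp
  then show ?thesis using assms
  proof (induction B rule: finite_induct)
    case empty
    then show ?case by simp
  next
    case (insert b B)
    then have indB: "vec.independent B" and bB: "b \<notin> vec.span B"
      using vec.independent_insert[of b B] by auto
    let ?f = "\<lambda>(c::'a, v). c *s b + v"
    have img: "vec.span (insert b B) = ?f ` (UNIV \<times> vec.span B)"
    proof (intro set_eqI iffI)
      fix x assume "x \<in> vec.span (insert b B)"
      then obtain c where "x - c *s b \<in> vec.span B" using vec.span_breakdown_eq by blast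
      then show "x \<in> ?f ` (UNIV \<times> vec.span B)"
        by (intro image_eqI[of _ _ "(c, x - c *s b)"]) auto
    next
      fix x assume "x \<in> ?f ` (UNIV \<times> vec.span B)"
      then obtain c v where "v \<in> vec.span B" "x = c *s b + v" by auto
      then show "x \<in> vec.span (insert b B)"
        by (auto simp: vec.span_breakdown_eq intro!: exI[of _ c])
    qed
    have "inj_on ?f (UNIV \<times> vec.span B)"
    proof (rule inj_onI, clarify)
      fix c v c' v'
      assume v: "v \<in> vec.span B" "v' \<in> vec.span B" and eq: "c *s b + v = c' *s b + v'"
      have "c = c'"
      proof (rule ccontr)
        assume "c \<noteq> c'"
        have "(c - c') *s b = v' - v" using eq by (simp add: algebra_simps vector_ssub_ldistrib)
        then have "inverse (c - c') *s ((c - c') *s b) \<in> vec.span B"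
          using v by (simp add: vec.span_diff vec.span_scale)
        then show False using bB \<open>c \<noteq> c'\<close> by (simp only: vector_smult_assoc) simp
      qed
      then show "c = c' \<and> v = v'" using eq by simp
    qed
    then have "card (vec.span (insert b B)) = CARD('a) * card (vec.span B)"
      unfolding img by (simp add: card_image card_cartesian_product)
    then show ?case using insert indB by simp
  qed
qed

lemma card_subspace:
  fixes U :: "('a::{finite,field}^'m) set"
  assumes "vec.subspace U"
  shows "card U = CARD('a) ^ vec.dim U"
proof -
  obtain B where "B \<subseteq> U" "vec.independent B" "U \<subseteq> vec.span B" "card B = vec.dim U"
    using vec.basis_exists by blast
  moreover have "vec.span B = U" using calculation assms by (simp add: vec.span_subspace)
  ultimately show ?thesis using card_span_independent by metis
qed

lemma card_subspace_Diff:
  fixes U V :: "('a::{finite,field}^'m) set"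
  assumes "vec.subspace U" "vec.subspace V" "V \<subseteq> U"
  shows "real (card (U - V)) = real CARD('a) ^ vec.dim U - real CARD('a) ^ vec.dim V"
proof -
  have "card V \<le> card U" using assms(3) by (simp add: card_mono)
  then show ?thesis using assms by (simp add: card_Diff_subset card_subspace of_nat_diff)
qed

lemma card_subspace_Diff_zero:
  fixes U :: "('a::{finite,field}^'m) set"
  assumes "vec.subspace U"
  shows "real (card (U - {0})) = real CARD('a) ^ vec.dim U - 1"
  using card_subspace_Diff[OF assms vec.subspace_single_0] vec.subspace_0[OF assms] by simp

lemma two_le_card_field: "CARD('a::{finite,field}) \<ge> 2"
proof -
  have "card {0::'a, 1} \<le> CARD('a)" by (rule card_mono) auto
  then show ?thesis by simp
qed

lemma dim_span_insert_subspace: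
  fixes U :: "('a::field^'m) set"
  assumes "vec.subspace U" "w \<notin> U"
  shows "vec.dim (vec.span (insert w U)) = vec.dim U + 1"
  using assms by (simp add: vec.dim_insert vec.span_eq_iff[THEN iffD2])

lemma dim_add_le_dim_Int:
  fixes A B U :: "('a::field^'m) set"
  assumes "vec.subspace A" "vec.subspace B" "vec.subspace U" "A \<subseteq> U" "B \<subseteq> U"
  shows "vec.dim A + vec.dim B \<le> vec.dim U + vec.dim (A \<inter> B)"
proof -
  have "{x + y |x y. x \<in> A \<and> y \<in> B} \<subseteq> U" using assms(3-5) by (auto intro: vec.subspace_add)
  then have "vec.dim {x + y |x y. x \<in> A \<and> y \<in> B} \<le> vec.dim U" by (rule vec.dim_subset)
  then show ?thesis using vec.dim_sums_Int[OF assms(1,2)] by linarith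
qed

lemma exists_subspace_Int_eq_zero:
  fixes U D :: "('a::field^'m) set"
  assumes "vec.subspace U" "vec.subspace D" "D \<subseteq> U" "m + vec.dim D \<le> vec.dim U"
  shows "\<exists>W. vec.subspace W \<and> W \<subseteq> U \<and> W \<inter> D = {0} \<and> vec.dim W = m"
proof -
  obtain B0 where B0: "B0 \<subseteq> D" "vec.independent B0" "D \<subseteq> vec.span B0" "card B0 = vec.dim D"
    using vec.basis_exists by blast
  obtain B where B: "B0 \<subseteq> B" "B \<subseteq> U" "vec.independent B" "U \<subseteq> vec.span B"
    using vec.maximal_independent_subset_extend[of B0 U] B0 assms by blast
  have "finite B" using B(3) vec.finiteI_independent by blast
  moreover have "card B = vec.dim U" using vec.basis_card_eq_dim B by blast
  ultimately have "m \<le> card (B - B0)"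
    using assms(4) B0(4) B(1) by (simp add: card_Diff_subset finite_subset)
  then obtain E where E: "E \<subseteq> B - B0" "card E = m"
    using obtain_subset_with_card_n by (metis Diff_subset)
  have indEB0: "vec.independent (E \<union> B0)" using vec.independent_mono[OF B(3)] E B(1) by blast
  then have indE: "vec.independent E" using vec.independent_mono by blast
  have spanB0: "vec.span B0 = D" using B0 assms(2) by (simp add: vec.span_subspace)
  \<comment> \<open>E and B0 are disjoint parts of one independent set, so their spans meet trivially.\<close>
  have "vec.dim (vec.span (E \<union> B0)) + vec.dim (vec.span E \<inter> vec.span B0)
      = vec.dim (vec.span E) + vec.dim (vec.span B0)"
    using vec.dim_sums_Int[of "vec.span E" "vec.span B0"] by (simp add: vec.span_Un)
  moreover have "card (E \<union> B0) = card E + card B0"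
    using E indEB0 vec.finiteI_independent by (subst card_Un_disjoint) auto
  ultimately have "vec.dim (vec.span E \<inter> D) = 0"
    using indE indEB0 B0(2,4) spanB0 by (simp add: vec.dim_eq_card_independent)
  then have "vec.span E \<inter> D = {0}"
    using assms(2) vec.subspace_0 vec.span_zero by (auto simp only: vec.dim_eq_0)
  moreover have "vec.span E \<subseteq> U" using E B assms(1) by (intro vec.span_minimal) auto
  moreover have "vec.dim (vec.span E) = m" using indE E by (simp add: vec.dim_eq_card_independent)
  ultimately show ?thesis by (intro exI[of _ "vec.span E"]) auto
qed

lemma gauss_binom_0 [simp]: "gauss_binom q a 0 = 1"
  by (simp add: gauss_binom_def)

lemma gauss_binom_Suc:
  "gauss_binom q a (Suc b) = (q ^ a - 1) / (q ^ Suc b - 1) * gauss_binom q (a - 1) b"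
proof -
  have "(\<Prod>i<Suc b. q ^ (a - i) - 1) = (q ^ a - 1) * (\<Prod>i<b. q ^ (a - 1 - i) - 1)"
    unfolding prod.lessThan_Suc_shift by simp
  moreover have "(\<Prod>i<Suc b. q ^ (i + 1) - 1) = (\<Prod>i<b. q ^ (i + 1) - 1) * (q ^ Suc b - 1)"
    by simp
  ultimately show ?thesis unfolding gauss_binom_def by (simp add: divide_inverse mult_ac)
qed

lemma gauss_binom_nonneg: "q \<ge> 1 \<Longrightarrow> gauss_binom q a b \<ge> 0"
  unfolding gauss_binom_def
  by (intro divide_nonneg_nonneg prod_nonneg) (simp_all add: one_le_power del: power_Suc)

lemma le_gauss_binom_Suc_mult:
  fixes q c C :: real
  assumes "q > 1" "D \<le> N"
    and "(q ^ (D + Suc j) - q ^ D) * c \<le> (q ^ N - q ^ D) * (gauss_binom q (N - D - 1) j * C)"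
  shows "c \<le> gauss_binom q (N - D) (Suc j) * C"
proof -
  have "q ^ (D + Suc j) - q ^ D = q ^ D * (q ^ Suc j - 1)" by (simp add: power_add algebra_simps)
  moreover have "q ^ N - q ^ D = q ^ D * (q ^ (N - D) - 1)"
    using assms(2) by (simp add: algebra_simps flip: power_add)
  ultimately have "(q ^ Suc j - 1) * c \<le> (q ^ (N - D) - 1) * (gauss_binom q (N - D - 1) j * C)"
    using assms(1,3) by (simp add: mult.assoc)
  moreover have "q ^ Suc j - 1 > 0" using assms(1) by (simp add: one_less_power del: power_Suc)
  ultimately show ?thesis by (simp add: gauss_binom_Suc pos_le_divide_eq mult_ac)
qed

lemma theta_mult_eq: "q \<noteq> 1 \<Longrightarrow> (q - 1) * theta q m = q ^ (m + 1) - 1"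
  by (simp add: theta_def)

lemma double_counting_le:
  fixes F :: "'b set set" and X :: "'b set" and a B :: real
  assumes "finite F" "finite X"
    and "\<And>\<alpha>. \<alpha> \<in> F \<Longrightarrow> a \<le> real (card (\<alpha> \<inter> X))"
    and "\<And>w. w \<in> X \<Longrightarrow> real (card {\<alpha>\<in>F. w \<in> \<alpha>}) \<le> B"
  shows "a * real (card F) \<le> real (card X) * B"
proof -
  have "a * real (card F) = (\<Sum>\<alpha>\<in>F. a)" by simp
  also have "\<dots> \<le> (\<Sum>\<alpha>\<in>F. real (card (\<alpha> \<inter> X)))"
    by (rule sum_mono) (rule assms(3))
  also have "\<dots> = (\<Sum>\<alpha>\<in>F. \<Sum>w\<in>X. if w \<in> \<alpha> then 1 else 0)"
    using assms(2) by (simp add: sum.If_cases Int_commute)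
  also have "\<dots> = (\<Sum>w\<in>X. \<Sum>\<alpha>\<in>F. if w \<in> \<alpha> then 1 else 0)"
    by (rule sum.swap)
  also have "\<dots> = (\<Sum>w\<in>X. real (card {\<alpha>\<in>F. w \<in> \<alpha>}))"
    using assms(1) by (simp add: sum.If_cases Int_def)
  also have "\<dots> \<le> (\<Sum>w\<in>X. B)"
    by (rule sum_mono) (rule assms(4))
  also have "\<dots> = real (card X) * B" by simp
  finally show ?thesis .
qed

definition containing :: "'v set set \<Rightarrow> 'v set \<Rightarrow> 'v set set" where
  "containing S \<sigma> = {\<alpha>\<in>S. \<sigma> \<subseteq> \<alpha>}"

lemma containing_zero:
  "(\<And>\<alpha>. \<alpha> \<in> S \<Longrightarrow> vec.subspace \<alpha>) \<Longrightarrow> containing S {0} = S"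
  unfolding containing_def using vec.subspace_0 by blast

lemma card_containing_double_counting:
  fixes S :: "('a::{finite,field}^'m) set set"
  assumes "\<And>\<alpha>. \<alpha> \<in> S \<Longrightarrow> vec.subspace \<alpha>"
    and "\<And>\<alpha>. \<alpha> \<in> containing S \<sigma> \<Longrightarrow> a \<le> real (card (\<alpha> \<inter> X))"
    and "\<And>w. w \<in> X \<Longrightarrow> real (card (containing S (vec.span (insert w \<sigma>)))) \<le> B"
  shows "a * real (card (containing S \<sigma>)) \<le> real (card X) * B"
proof (rule double_counting_le[OF _ _ assms(2)])
  fix w assume "w \<in> X"
  have "{\<alpha> \<in> containing S \<sigma>. w \<in> \<alpha>} \<subseteq> containing S (vec.span (insert w \<sigma>))"
    unfolding containing_def using assms(1) vec.span_minimal by blast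
  then have "card {\<alpha> \<in> containing S \<sigma>. w \<in> \<alpha>} \<le> card (containing S (vec.span (insert w \<sigma>)))"
    by (simp add: card_mono)
  then show "real (card {\<alpha> \<in> containing S \<sigma>. w \<in> \<alpha>}) \<le> B"
    using assms(3)[OF \<open>w \<in> X\<close>] by linarith
qed simp_all

lemma card_containing_le_gauss_binom_within:
  fixes S :: "('a::{finite,field}^'m) set set"
  assumes S: "\<And>\<alpha>. \<alpha> \<in> S \<Longrightarrow> vec.subspace \<alpha>"
    and "vec.subspace T"
    and meets: "\<And>\<alpha>. \<alpha> \<in> S \<Longrightarrow> \<tau> \<le> vec.dim (T \<inter> \<alpha>)"
    and base: "\<And>\<rho>. vec.subspace \<rho> \<Longrightarrow> vec.dim \<rho> = \<tau> \<Longrightarrow> real (card (containing S \<rho>)) \<le> C"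
    and "vec.subspace \<sigma>" "\<sigma> \<subseteq> T" "vec.dim \<sigma> \<le> \<tau>"
  shows "real (card (containing S \<sigma>))
           \<le> gauss_binom (real CARD('a)) (vec.dim T - vec.dim \<sigma>) (\<tau> - vec.dim \<sigma>) * C"
  using assms(5-7)
proof (induction "\<tau> - vec.dim \<sigma>" arbitrary: \<sigma>)
  case 0
  then show ?case using base by simp
next
  case (Suc j \<sigma>)
  define q where "q = real CARD('a)"
  define D where "D = vec.dim \<sigma>"
  have q1: "q > 1" using two_le_card_field[where 'a='a] unfolding q_def by simp
  have "(q ^ \<tau> - q ^ D) * real (card (containing S \<sigma>))
      \<le> real (card (T - \<sigma>)) * (gauss_binom q (vec.dim T - D - 1) j * C)"
  proof (rule card_containing_double_counting)
    fix \<alpha> assume "\<alpha> \<in> containing S \<sigma>"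
    then have \<alpha>: "\<alpha> \<in> S" "vec.subspace (\<alpha> \<inter> T)" "\<sigma> \<subseteq> \<alpha> \<inter> T"
      using S Suc.prems(2) \<open>vec.subspace T\<close> unfolding containing_def by (auto intro: vec.subspace_inter)
    have "q ^ \<tau> \<le> q ^ vec.dim (\<alpha> \<inter> T)"
      using q1 meets[OF \<alpha>(1)] by (intro power_increasing) (auto simp: Int_commute)
    moreover have "\<alpha> \<inter> (T - \<sigma>) = (\<alpha> \<inter> T) - \<sigma>" by blast
    ultimately show "q ^ \<tau> - q ^ D \<le> real (card (\<alpha> \<inter> (T - \<sigma>)))"
      using card_subspace_Diff[OF \<alpha>(2) Suc.prems(1) \<alpha>(3)] unfolding q_def D_def by simp
  next
    fix w assume w: "w \<in> T - \<sigma>"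
    let ?\<rho> = "vec.span (insert w \<sigma>)"
    have "?\<rho> \<subseteq> T" using w Suc.prems(2) \<open>vec.subspace T\<close> by (intro vec.span_minimal) auto
    have dim_\<rho>: "vec.dim ?\<rho> = D + 1"
      using w dim_span_insert_subspace Suc.prems(1) unfolding D_def by blast
    then have j: "j = \<tau> - vec.dim ?\<rho>" and "vec.dim ?\<rho> \<le> \<tau>"
      using Suc.hyps(2) unfolding D_def by linarith+
    from Suc.hyps(1)[OF j vec.subspace_span \<open>?\<rho> \<subseteq> T\<close> \<open>vec.dim ?\<rho> \<le> \<tau>\<close>]
    show "real (card (containing S ?\<rho>)) \<le> gauss_binom q (vec.dim T - D - 1) j * C"
      using dim_\<rho> j unfolding q_def by simp
  qed (use S in blast)
  moreover have "real (card (T - \<sigma>)) = q ^ vec.dim T - q ^ D"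
    using card_subspace_Diff[OF \<open>vec.subspace T\<close> Suc.prems(1,2)] unfolding q_def D_def by simp
  moreover have "\<tau> = D + Suc j" using Suc.hyps(2) Suc.prems(3) unfolding D_def by linarith
  ultimately have "(q ^ (D + Suc j) - q ^ D) * real (card (containing S \<sigma>))
      \<le> (q ^ vec.dim T - q ^ D) * (gauss_binom q (vec.dim T - D - 1) j * C)"
    by simp
  from le_gauss_binom_Suc_mult[OF q1 vec.dim_subset[OF Suc.prems(2)] this[unfolded D_def]]
  show ?case unfolding q_def Suc.hyps(2)[symmetric] .
qed

lemma card_containing_le_gauss_binom:
  fixes S :: "('a::{finite,field}^'m) set set"
  assumes S: "\<And>\<alpha>. \<alpha> \<in> S \<Longrightarrow> vec.subspace \<alpha> \<and> vec.dim \<alpha> = K"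
    and "vec.subspace \<sigma>"
  shows "real (card (containing S \<sigma>))
           \<le> gauss_binom (real CARD('a)) (CARD('m) - vec.dim \<sigma>) (K - vec.dim \<sigma>)"
proof (cases "vec.dim \<sigma> \<le> K")
  case True
  have "card (containing S \<rho>) \<le> 1" if "vec.subspace \<rho>" "vec.dim \<rho> = K" for \<rho>
  proof -
    have "containing S \<rho> \<subseteq> {\<rho>}"
      unfolding containing_def using S that vec.subspace_dim_equal by fastforce
    then show ?thesis using card_mono[of "{\<rho>}"] by fastforce
  qed
  then show ?thesis
    using card_containing_le_gauss_binom_within[OF _ vec.subspace_UNIV _ _ assms(2) subset_UNIV True,
        of S 1, unfolded vec_dim_card]
      S by simp
next
  case False
  have "\<not> \<sigma> \<subseteq> \<alpha>" if "\<alpha> \<in> S" for \<alpha>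
    using vec.dim_subset[of \<sigma> \<alpha>] S[OF that] False by auto
  then have "containing S \<sigma> = {}" unfolding containing_def by blast
  then show ?thesis using two_le_card_field[where 'a='a] by (simp add: gauss_binom_nonneg)
qed

lemma card_containing_le_theta_power:
  fixes S :: "('a::{finite,field}^'m) set set"
  assumes S: "\<And>\<alpha>. \<alpha> \<in> S \<Longrightarrow> vec.subspace \<alpha> \<and> vec.dim \<alpha> = K"
    and pairwise: "\<And>\<alpha> \<beta>. \<alpha> \<in> S \<Longrightarrow> \<beta> \<in> S \<Longrightarrow> \<tau> \<le> vec.dim (\<alpha> \<inter> \<beta>)"
    and "\<tau> \<le> K"
    and uncovered: "\<And>T. vec.subspace T \<Longrightarrow> 1 \<le> vec.dim T \<Longrightarrow> vec.dim T < M \<Longrightarrow>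
      \<exists>\<beta>\<in>S. vec.dim (T \<inter> \<beta>) < \<tau>"
    and base: "\<And>\<rho>. vec.subspace \<rho> \<Longrightarrow> vec.dim \<rho> = M \<Longrightarrow> real (card (containing S \<rho>)) \<le> G"
    and "vec.subspace \<sigma>" "1 \<le> vec.dim \<sigma>" "vec.dim \<sigma> \<le> M"
  shows "real (card (containing S \<sigma>)) \<le> theta (real CARD('a)) (K - \<tau>) ^ (M - vec.dim \<sigma>) * G"
  using assms(6-8)
proof (induction "M - vec.dim \<sigma>" arbitrary: \<sigma>)
  case 0
  then show ?case using base by simp
next
  case (Suc j \<sigma>)
  define q where "q = real CARD('a)"
  have q1: "q > 1" using two_le_card_field[where 'a='a] unfolding q_def by simp
  obtain \<beta> where \<beta>: "\<beta> \<in> S" "vec.dim (\<sigma> \<inter> \<beta>) < \<tau>"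
    using uncovered[OF Suc.prems(1,2)] Suc.hyps(2) by (metis zero_less_Suc zero_less_diff)
  have "vec.subspace \<beta>" "vec.dim \<beta> = K" using S \<beta>(1) by auto
  moreover have "vec.subspace (\<sigma> \<inter> \<beta>)" using Suc.prems(1) calculation(1) by (rule vec.subspace_inter)
  moreover have "K - \<tau> + 1 + vec.dim (\<sigma> \<inter> \<beta>) \<le> vec.dim \<beta>"
    using \<beta>(2) \<open>\<tau> \<le> K\<close> calculation(2) by linarith
  ultimately obtain W where W: "vec.subspace W" "W \<subseteq> \<beta>" "W \<inter> (\<sigma> \<inter> \<beta>) = {0}"
      "vec.dim W = K - \<tau> + 1"
    using exists_subspace_Int_eq_zero[of \<beta> "\<sigma> \<inter> \<beta>" "K - \<tau> + 1"] by blast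
  \<comment> \<open>Inside \<beta>, W is large enough to meet every \<alpha> \<inter> \<beta>, yet misses \<sigma>.\<close>
  have "(q - 1) * real (card (containing S \<sigma>))
      \<le> real (card (W - {0})) * (theta q (K - \<tau>) ^ j * G)"
  proof (rule card_containing_double_counting)
    fix \<alpha> assume "\<alpha> \<in> containing S \<sigma>"
    then have \<alpha>: "\<alpha> \<in> S" "vec.subspace \<alpha>" using S unfolding containing_def by auto
    have "(\<alpha> \<inter> \<beta>) \<inter> W = \<alpha> \<inter> W" using W(2) by blast
    then have "vec.dim (\<alpha> \<inter> \<beta>) + vec.dim W \<le> vec.dim \<beta> + vec.dim (\<alpha> \<inter> W)"
      using dim_add_le_dim_Int[of "\<alpha> \<inter> \<beta>" W \<beta>] \<alpha>(2) \<open>vec.subspace \<beta>\<close> W(1,2)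
      by (metis Int_lower2 vec.subspace_inter)
    then have "1 \<le> vec.dim (\<alpha> \<inter> W)"
      using pairwise[OF \<alpha>(1) \<beta>(1)] W(4) \<open>vec.dim \<beta> = K\<close> \<open>\<tau> \<le> K\<close> by linarith
    then have "q ^ 1 \<le> q ^ vec.dim (\<alpha> \<inter> W)" using q1 by (intro power_increasing) auto
    moreover have "\<alpha> \<inter> (W - {0}) = (\<alpha> \<inter> W) - {0}" by blast
    moreover have "real (card ((\<alpha> \<inter> W) - {0})) = q ^ vec.dim (\<alpha> \<inter> W) - 1"
      unfolding q_def by (rule card_subspace_Diff_zero) (rule vec.subspace_inter[OF \<alpha>(2) W(1)])
    ultimately show "q - 1 \<le> real (card (\<alpha> \<inter> (W - {0})))" by simp
  next
    fix w assume "w \<in> W - {0}"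
    let ?\<rho> = "vec.span (insert w \<sigma>)"
    have "w \<notin> \<sigma>" using \<open>w \<in> W - {0}\<close> W(2,3) by blast
    then have "vec.dim ?\<rho> = vec.dim \<sigma> + 1" using dim_span_insert_subspace Suc.prems(1) by blast
    then have j: "j = M - vec.dim ?\<rho>" and \<rho>: "1 \<le> vec.dim ?\<rho>" "vec.dim ?\<rho> \<le> M"
      using Suc.hyps(2) by linarith+
    from Suc.hyps(1)[OF j vec.subspace_span \<rho>]
    show "real (card (containing S ?\<rho>)) \<le> theta q (K - \<tau>) ^ j * G" unfolding q_def j .
  qed (use S in blast)
  moreover have "real (card (W - {0})) = (q - 1) * theta q (K - \<tau>)"
    using card_subspace_Diff_zero[OF W(1)] W(4) theta_mult_eq[of q] q1
    unfolding q_def by simp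
  ultimately have "(q - 1) * real (card (containing S \<sigma>))
      \<le> (q - 1) * (theta q (K - \<tau>) ^ Suc j * G)"
    by (simp add: mult_ac)
  then have "real (card (containing S \<sigma>)) \<le> theta q (K - \<tau>) ^ Suc j * G" using q1 by simp
  then show ?case unfolding q_def Suc.hyps(2)[symmetric] .
qed

theorem card_le_of_minimal_cover:
  fixes S :: "('a::{finite,field}^'m) set set"
  assumes S: "\<And>\<alpha>. \<alpha> \<in> S \<Longrightarrow> vec.subspace \<alpha> \<and> vec.dim \<alpha> = K"
    and pairwise: "\<And>\<alpha> \<beta>. \<alpha> \<in> S \<Longrightarrow> \<beta> \<in> S \<Longrightarrow> \<tau> \<le> vec.dim (\<alpha> \<inter> \<beta>)"
    and "1 \<le> \<tau>" "\<tau> \<le> K" "\<tau> \<le> M"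
    and T: "vec.subspace T" "vec.dim T = M" "\<And>\<alpha>. \<alpha> \<in> S \<Longrightarrow> \<tau> \<le> vec.dim (T \<inter> \<alpha>)"
    and uncovered: "\<And>U. vec.subspace U \<Longrightarrow> 1 \<le> vec.dim U \<Longrightarrow> vec.dim U < M \<Longrightarrow>
      \<exists>\<beta>\<in>S. vec.dim (U \<inter> \<beta>) < \<tau>"
  shows "real (card S) \<le> gauss_binom (real CARD('a)) M \<tau> * theta (real CARD('a)) (K - \<tau>) ^ (M - \<tau>)
           * gauss_binom (real CARD('a)) (CARD('m) - M) (K - M)"
proof -
  define G where "G = gauss_binom (real CARD('a)) (CARD('m) - M) (K - M)"
  have base: "real (card (containing S \<rho>)) \<le> G" if "vec.subspace \<rho>" "vec.dim \<rho> = M" for \<rho>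
    using card_containing_le_gauss_binom[OF S that(1)] unfolding G_def that(2) .
  have through_\<tau>: "real (card (containing S \<rho>)) \<le> theta (real CARD('a)) (K - \<tau>) ^ (M - \<tau>) * G"
    if "vec.subspace \<rho>" "vec.dim \<rho> = \<tau>" for \<rho>
  proof -
    have "1 \<le> vec.dim \<rho>" "vec.dim \<rho> \<le> M" using that(2) assms(3,5) by simp_all
    from card_containing_le_theta_power[where M = M, OF S pairwise \<open>\<tau> \<le> K\<close> uncovered base that(1) this]
    show ?thesis unfolding that(2) .
  qed
  have "real (card (containing S {0}))
      \<le> gauss_binom (real CARD('a)) (vec.dim T - vec.dim {0::'a^'m}) (\<tau> - vec.dim {0::'a^'m})
        * (theta (real CARD('a)) (K - \<tau>) ^ (M - \<tau>) * G)"
    by (rule card_containing_le_gauss_binom_within[OF _ T(1) T(3) through_\<tau>])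
      (use S T(1) vec.subspace_0 in auto)
  moreover have "containing S {0} = S" using S by (intro containing_zero) blast
  ultimately show ?thesis unfolding G_def T(2) by (simp add: mult_ac)
qed

lemma psi_attained:
  assumes "vec.subspace T" "1 \<le> vec.dim T" "\<forall>\<alpha>\<in>S. t + 1 \<le> vec.dim (T \<inter> \<alpha>)"
  obtains T' where "vec.subspace T'" "vec.dim T' = psi t S + 1"
    "\<forall>\<alpha>\<in>S. t + 1 \<le> vec.dim (T' \<inter> \<alpha>)"
proof -
  have "\<exists>d T. vec.subspace T \<and> vec.dim T = d + 1 \<and> (\<forall>\<alpha>\<in>S. t + 1 \<le> vec.dim (T \<inter> \<alpha>))"
    using assms by (intro exI[of _ "vec.dim T - 1"] exI[of _ T]) auto
  from LeastI_ex[OF this] show ?thesis using that unfolding psi_def by blast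
qed

lemma psi_minimal:
  assumes "vec.subspace U" "1 \<le> vec.dim U" "vec.dim U \<le> psi t S"
  shows "\<exists>\<beta>\<in>S. vec.dim (U \<inter> \<beta>) < t + 1"
proof (rule ccontr)
  assume "\<not> (\<exists>\<beta>\<in>S. vec.dim (U \<inter> \<beta>) < t + 1)"
  then have "psi t S \<le> vec.dim U - 1"
    unfolding psi_def using assms(1,2) by (intro Least_le) (auto simp: not_less)
  then show False using assms(2,3) by linarith
qed

theorem mainTheorem9:
  fixes S :: "('a::{finite,field} ^ 'm) set set"
    and n k t x :: nat and q :: real
  assumes "q = real CARD('a)"
    and "n = CARD('m) - 1"
    and "k > t + 1"
    and "n + t > 2 * k"
    and "maximal_t_intersecting k t S"
    and "psi t S = t + x"
    and "x \<ge> 2"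
  shows "real (card S) \<le> (theta q (k - t)) ^ x * gauss_binom q (n - t - x) (k - t - x)
                           * gauss_binom q (t + x + 1) (t + 1)"
proof -
  have S: "\<And>\<alpha>. \<alpha> \<in> S \<Longrightarrow> vec.subspace \<alpha> \<and> vec.dim \<alpha> = k + 1"
    and pairwise: "\<And>\<alpha> \<beta>. \<alpha> \<in> S \<Longrightarrow> \<beta> \<in> S \<Longrightarrow> t + 1 \<le> vec.dim (\<alpha> \<inter> \<beta>)"
    using assms(5) unfolding maximal_t_intersecting_def pairwise_t_intersecting_def is_kspace_def
    by blast+
  have "1 \<le> vec.dim (UNIV :: ('a^'m) set)" unfolding vec_dim_card by (simp add: Suc_le_eq)
  moreover have "\<forall>\<alpha>\<in>S. t + 1 \<le> vec.dim (UNIV \<inter> \<alpha>)"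
  proof
    fix \<alpha> assume "\<alpha> \<in> S"
    then show "t + 1 \<le> vec.dim (UNIV \<inter> \<alpha>)" using S[of \<alpha>] assms(3) by simp
  qed
  ultimately obtain T where T: "vec.subspace T" "vec.dim T = psi t S + 1"
      "\<forall>\<alpha>\<in>S. t + 1 \<le> vec.dim (T \<inter> \<alpha>)"
    by (rule psi_attained[OF vec.subspace_UNIV])
  have uncovered: "\<exists>\<beta>\<in>S. vec.dim (U \<inter> \<beta>) < t + 1"
    if "vec.subspace U" "1 \<le> vec.dim U" "vec.dim U < t + x + 1" for U
    using psi_minimal[OF that(1,2)] that(3) assms(6) by simp
  have "real (card S) \<le> gauss_binom q (t + x + 1) (t + 1)
      * theta q (k + 1 - (t + 1)) ^ (t + x + 1 - (t + 1))
      * gauss_binom q (CARD('m) - (t + x + 1)) (k + 1 - (t + x + 1))"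
    unfolding assms(1)
    by (rule card_le_of_minimal_cover[where M = "t + x + 1",
          OF S pairwise _ _ _ T(1) T(2)[unfolded assms(6)] T(3)[rule_format] uncovered])
      (use assms(3) in simp_all)
  then show ?thesis using assms(2) by (simp add: mult_ac diff_diff_add)
qed

end
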